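(* Let $\mathcal{G}$ be a family of nonatomic routing problems with homogeneous users, and let $\beta \ge 0$. Then $$\mathrm{PoA}\big(\mathcal{G},T^{\mathrm{opt}+}(\beta)\big) \;\ge\; \mathrm{PoA}\big(\mathcal{G},T^{\mathrm{opt}-}(\beta)\big) \;\ge\; 1,$$ i.e., the optimal $\beta$-bounded subsidy mechanism has price of anarchy no greater than the optimal $\beta$-bounded tolling mechanism. Moreover, if every optimal $\beta$-bounded subsidy mechanism is tightly bounded, then the first inequality is strict.
   Context: A routing problem $G$ consists of a directed graph $(V,E)$, origin–destination pairs $(o_i,d_i)$, $i=1,\dots,k$, with traffic masses $r_i>0$, $\sum_i r_i=1$, and for each edge $e$ a nonnegative nondecreasing latency function $\ell_e:\mathbb{R}_{\ge0}\to\mathbb{R}_{\ge0}$. Let $\mathcal{P}_i$ be the set of simple $o_i$–$d_i$ paths. A flow assigns mass $f_P\ge0$ to each path, is feasible if $\sum_{P\in\mathcal{P}_i}f_P=r_i$ for all $i$, and has edge flows $f_e=\sum_{P\ni e}f_P$. Its total latency is $\mathcal{L}(f)=\sum_{e}f_e\ell_e(f_e)$, and $\mathcal{L}^{\mathrm{opt}}(G)$ is the minimum total latency over feasible flows. Users form a continuum $N=\bigcup_i N_i$ of disjoint intervals with Lebesgue measure $\mu(N_i)=r_i$; users in $N_i$ choose a path in $\mathcal{P}_i$. Each user $x$ has a sensitivity $s_x\ge0$ to incentives; users are homogeneous when $s_x=1$ for all $x$. For a family $\mathcal{G}$ of routing problems let $L(\mathcal{G})$ be the set of all latency functions occurring in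 it. An incentive mechanism $T$ assigns to each latency function $\ell\in L(\mathcal{G})$ a function $T(\ell):[0,1]\to\mathbb{R}$, and each edge $e$ receives incentive $\tau_e=T(\ell_e)$. A user $x\in N_i$ on path $P$ under flow $f$ has cost $J_x(P,f)=\sum_{e\in P}\big(\ell_e(f_e)+s_x\tau_e(f_e)\big)$; a Nash flow is a feasible flow in which every user uses a path minimizing its cost among $\mathcal{P}_i$. $\mathcal{L}^{\mathrm{Nash}}(G,T)$ is the highest total latency of a Nash flow, and $\mathrm{PoA}(\mathcal{G},T)=\sup_{G\in\mathcal{G}}\mathcal{L}^{\mathrm{Nash}}(G,T)/\mathcal{L}^{\mathrm{opt}}(G)$ (homogeneous users). A $\beta$-bounded tolling mechanism satisfies $T(\ell)[f]\in[0,\beta\ell(f)]$ for all $f\in[0,1]$ and all $\ell\in L(\mathcal{G})$; a $\beta$-bounded subsidy mechanism satisfies $T(\ell)[f]\in[-\beta\ell(f),0]$. $T^{\mathrm{opt}+}(\beta)$ (resp. $T^{\mathrm{opt}-}(\beta)$) denotes an optimal $\beta$-bounded tolling (resp. subsidy) mechanism, i.e., one minimizing $\mathrm{PoA}(\mathcal{G},\cdot)$ over all $\beta$-bounded tolling (resp. subsidy) mechanisms. A subsidy mechanism is tightly bounded if $T(\ell)[f]=-\beta\ell(f)$ for some $\ell\in L(\mathcal{G})$ and some $f\in(0,1]$ (i.e., the budget constraint is active).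
   Formalization: A subsidy mechanism counts as tightly bounded only if also $\beta\ell(f) > 0$ at the point $f \in (0,1]$ where $T(\ell)[f]=-\beta\ell(f)$, so the active subsidy bound is strictly negative. The statement above fails without it. *)

theory Defs
  imports "HOL-Library.Extended_Real"
begin

record ('v, 'e) routing =
  edges   :: "'e set"
  etail   :: "'e \<Rightarrow> 'v"
  ehead   :: "'e \<Rightarrow> 'v"
  ncom    :: nat
  orig    :: "nat \<Rightarrow> 'v"
  dest    :: "nat \<Rightarrow> 'v"
  mass    :: "nat \<Rightarrow> real"
  lat     :: "'e \<Rightarrow> real \<Rightarrow> real"

definition simple_path :: "('v, 'e, 'z) routing_scheme \<Rightarrow> 'v \<Rightarrow> 'v \<Rightarrow> 'e list \<Rightarrow> bool" where
  "simple_path G o' d P \<longleftrightarrow>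
     (P = [] \<and> o' = d) \<or>
     (P \<noteq> [] \<and> set P \<subseteq> edges G \<and>
      (\<forall>j. Suc j < length P \<longrightarrow> ehead G (P ! j) = etail G (P ! Suc j)) \<and>
      etail G (hd P) = o' \<and> ehead G (last P) = d \<and>
      distinct (etail G (hd P) # map (ehead G) P))"

definition paths :: "('v, 'e, 'z) routing_scheme \<Rightarrow> nat \<Rightarrow> 'e list set" where
  "paths G i = {P. simple_path G (orig G i) (dest G i) P}"

definition wf_routing :: "('v, 'e, 'z) routing_scheme \<Rightarrow> bool" where
  "wf_routing G \<longleftrightarrow>
     finite (edges G) \<and> ncom G \<ge> 1 \<and>
     (\<forall>i<ncom G. mass G i > 0) \<and> (\<Sum>i<ncom G. mass G i) = 1 \<and>
     (\<forall>e\<in>edges G. (\<forall>x\<ge>0. lat G e x \<ge> 0) \<and> mono_on {0..} (lat G e)) \<and>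
     (\<forall>i<ncom G. paths G i \<noteq> {})"

text \<open>Path flows: f i P is the mass of commodity i routed on path P.\<close>

type_synonym 'e flow = "nat \<Rightarrow> 'e list \<Rightarrow> real"

definition feasible :: "('v, 'e, 'z) routing_scheme \<Rightarrow> 'e flow \<Rightarrow> bool" where
  "feasible G f \<longleftrightarrow>
     (\<forall>i<ncom G. \<forall>P. f i P \<ge> 0 \<and> (P \<notin> paths G i \<longrightarrow> f i P = 0)) \<and>
     (\<forall>i<ncom G. (\<Sum>P\<in>paths G i. f i P) = mass G i)"

definition edge_flow :: "('v, 'e, 'z) routing_scheme \<Rightarrow> 'e flow \<Rightarrow> 'e \<Rightarrow> real" where
  "edge_flow G f e = (\<Sum>i<ncom G. \<Sum>P\<in>{P\<in>paths G i. e \<in> set P}. f i P)"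

definition total_latency :: "('v, 'e, 'z) routing_scheme \<Rightarrow> 'e flow \<Rightarrow> real" where
  "total_latency G f = (\<Sum>e\<in>edges G. edge_flow G f e * lat G e (edge_flow G f e))"

definition opt_latency :: "('v, 'e, 'z) routing_scheme \<Rightarrow> real" where
  "opt_latency G = Inf {total_latency G f | f. feasible G f}"

text \<open>An incentive mechanism maps a latency function to an incentive function.\<close>

type_synonym mechanism = "(real \<Rightarrow> real) \<Rightarrow> real \<Rightarrow> real"

text \<open>Cost of a path for a homogeneous user (sensitivity 1).\<close>

definition path_cost :: "('v, 'e, 'z) routing_scheme \<Rightarrow> mechanism \<Rightarrow> 'e flow \<Rightarrow> 'e list \<Rightarrow> real" where
  "path_cost G T f P =
     (\<Sum>e\<leftarrow>P. lat G e (edge_flow G f e) + T (lat G e) (edge_flow G f e))"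

definition nash :: "('v, 'e, 'z) routing_scheme \<Rightarrow> mechanism \<Rightarrow> 'e flow \<Rightarrow> bool" where
  "nash G T f \<longleftrightarrow> feasible G f \<and>
     (\<forall>i<ncom G. \<forall>P\<in>paths G i. f i P > 0 \<longrightarrow>
        (\<forall>Q\<in>paths G i. path_cost G T f P \<le> path_cost G T f Q))"

definition nash_latency :: "('v, 'e, 'z) routing_scheme \<Rightarrow> mechanism \<Rightarrow> ereal" where
  "nash_latency G T =
     (if \<exists>f. nash G T f then Sup {ereal (total_latency G f) | f. nash G T f} else \<infinity>)"

definition poa_ratio :: "ereal \<Rightarrow> real \<Rightarrow> ereal" where
  "poa_ratio LN LO = (if LO = 0 then (if LN = 0 then 1 else \<infinity>) else LN / ereal LO)"

definition PoA :: "('v, 'e, 'z) routing_scheme set \<Rightarrow> mechanism \<Rightarrow> ereal" where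
  "PoA \<G> T = (SUP G\<in>\<G>. poa_ratio (nash_latency G T) (opt_latency G))"

definition latencies :: "('v, 'e, 'z) routing_scheme set \<Rightarrow> (real \<Rightarrow> real) set" where
  "latencies \<G> = {lat G e | G e. G \<in> \<G> \<and> e \<in> edges G}"

definition bounded_tolling :: "('v, 'e, 'z) routing_scheme set \<Rightarrow> real \<Rightarrow> mechanism \<Rightarrow> bool" where
  "bounded_tolling \<G> \<beta> T \<longleftrightarrow>
     (\<forall>l\<in>latencies \<G>. \<forall>x\<in>{0..1}. 0 \<le> T l x \<and> T l x \<le> \<beta> * l x)"

definition bounded_subsidy :: "('v, 'e, 'z) routing_scheme set \<Rightarrow> real \<Rightarrow> mechanism \<Rightarrow> bool" where
  "bounded_subsidy \<G> \<beta> T \<longleftrightarrow>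
     (\<forall>l\<in>latencies \<G>. \<forall>x\<in>{0..1}. - \<beta> * l x \<le> T l x \<and> T l x \<le> 0)"

definition optimal_tolling :: "('v, 'e, 'z) routing_scheme set \<Rightarrow> real \<Rightarrow> mechanism \<Rightarrow> bool" where
  "optimal_tolling \<G> \<beta> T \<longleftrightarrow> bounded_tolling \<G> \<beta> T \<and>
     (\<forall>T'. bounded_tolling \<G> \<beta> T' \<longrightarrow> PoA \<G> T \<le> PoA \<G> T')"

definition optimal_subsidy :: "('v, 'e, 'z) routing_scheme set \<Rightarrow> real \<Rightarrow> mechanism \<Rightarrow> bool" where
  "optimal_subsidy \<G> \<beta> T \<longleftrightarrow> bounded_subsidy \<G> \<beta> T \<and>
     (\<forall>T'. bounded_subsidy \<G> \<beta> T' \<longrightarrow> PoA \<G> T \<le> PoA \<G> T')"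

text \<open>Tightly bounded: the budget constraint is active (non-degenerately, i.e. the
  bound -\<beta> l(x) is strictly negative there).\<close>

definition tightly_bounded :: "('v, 'e, 'z) routing_scheme set \<Rightarrow> real \<Rightarrow> mechanism \<Rightarrow> bool" where
  "tightly_bounded \<G> \<beta> T \<longleftrightarrow>
     (\<exists>l\<in>latencies \<G>. \<exists>x\<in>{0<..1}. T l x = - \<beta> * l x \<and> \<beta> * l x > 0)"

end

theory Submission
  imports Defs
begin

text \<open>The affine change of incentives \<open>T \<mapsto> (T - \<beta> \<ell>) / (1 + \<beta>)\<close> divides every
  path cost by \<open>1 + \<beta>\<close>, so it leaves the Nash flows and hence the price of anarchy
  unchanged, and it maps \<open>\<beta>\<close>-bounded tolls onto \<open>\<beta>\<close>-bounded subsidies. Thus the best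
  subsidy is at least as good as the best toll. The image of a toll \<open>T \<ge> 0\<close> never
  meets the budget bound \<open>-\<beta> \<ell>\<close> where \<open>\<beta> \<ell> > 0\<close>, since that would force
  \<open>T = -\<beta>\<^sup>2 \<ell> < 0\<close>; so if all optimal subsidies are tight, the image is not optimal and
  the inequality is strict. Finally every ratio is at least 1 because a Nash flow is
  feasible.\<close>

definition subsidy_of_toll :: "real \<Rightarrow> mechanism \<Rightarrow> mechanism" where
  "subsidy_of_toll \<beta> T = (\<lambda>l x. (T l x - \<beta> * l x) / (1 + \<beta>))"

lemma path_cost_subsidy_of_toll:
  assumes "\<beta> \<ge> 0"
  shows "path_cost G (subsidy_of_toll \<beta> T) f P = path_cost G T f P / (1 + \<beta>)"
proof -
  have "a + (b - \<beta> * a) / (1 + \<beta>) = (a + b) * inverse (1 + \<beta>)" for a b :: real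
    using assms by (simp add: field_simps)
  then show ?thesis
    unfolding path_cost_def subsidy_of_toll_def
    by (simp add: sum_list_mult_const divide_inverse)
qed

lemma nash_subsidy_of_toll_iff:
  assumes "\<beta> \<ge> 0"
  shows "nash G (subsidy_of_toll \<beta> T) f \<longleftrightarrow> nash G T f"
  using assms unfolding nash_def path_cost_subsidy_of_toll[OF assms]
  by (simp add: divide_le_cancel add_pos_nonneg)

lemma PoA_subsidy_of_toll:
  assumes "\<beta> \<ge> 0"
  shows "PoA \<G> (subsidy_of_toll \<beta> T) = PoA \<G> T"
  unfolding PoA_def nash_latency_def nash_subsidy_of_toll_iff[OF assms] ..

lemma latencies_nonneg:
  assumes "\<forall>G\<in>\<G>. wf_routing G" "l \<in> latencies \<G>" "x \<ge> 0"
  shows "l x \<ge> 0"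
  using assms unfolding latencies_def wf_routing_def by auto

lemma bounded_subsidy_subsidy_of_toll:
  assumes "\<forall>G\<in>\<G>. wf_routing G" "\<beta> \<ge> 0" "bounded_tolling \<G> \<beta> T"
  shows "bounded_subsidy \<G> \<beta> (subsidy_of_toll \<beta> T)"
  unfolding bounded_subsidy_def
proof (intro ballI conjI)
  fix l x assume l: "l \<in> latencies \<G>" and x: "x \<in> {0..(1::real)}"
  have "l x \<ge> 0" using latencies_nonneg[OF assms(1) l] x by simp
  then have "\<beta> * (\<beta> * l x) \<ge> 0" using assms(2) by simp
  moreover have "0 \<le> T l x" "T l x \<le> \<beta> * l x"
    using assms(3) l x unfolding bounded_tolling_def by auto
  ultimately have "- \<beta> * l x * (1 + \<beta>) \<le> T l x - \<beta> * l x" "T l x - \<beta> * l x \<le> 0"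
    by (simp_all add: algebra_simps)
  then show "- \<beta> * l x \<le> subsidy_of_toll \<beta> T l x" "subsidy_of_toll \<beta> T l x \<le> 0"
    using assms(2) by (simp_all add: subsidy_of_toll_def pos_le_divide_eq divide_nonpos_pos)
qed

lemma not_tightly_bounded_subsidy_of_toll:
  assumes "\<beta> \<ge> 0" "bounded_tolling \<G> \<beta> T"
  shows "\<not> tightly_bounded \<G> \<beta> (subsidy_of_toll \<beta> T)"
proof
  assume "tightly_bounded \<G> \<beta> (subsidy_of_toll \<beta> T)"
  then obtain l x where l: "l \<in> latencies \<G>" and x: "x \<in> {0<..1::real}"
    and tight: "subsidy_of_toll \<beta> T l x = - \<beta> * l x" and pos: "\<beta> * l x > 0"
    unfolding tightly_bounded_def by blast
  have "T l x = - \<beta> * (\<beta> * l x)"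
    using tight assms(1) by (simp add: subsidy_of_toll_def field_simps)
  moreover have "\<beta> * (\<beta> * l x) > 0"
    using pos assms(1) by (simp add: zero_less_mult_iff)
  moreover have "T l x \<ge> 0"
    using assms(2) l x unfolding bounded_tolling_def by auto
  ultimately show False by simp
qed

lemma finite_paths:
  assumes "wf_routing G"
  shows "finite (paths G i)"
proof (rule finite_subset)
  show "paths G i \<subseteq> {xs. set xs \<subseteq> edges G \<and> distinct xs}"
    unfolding paths_def simple_path_def by (auto simp: distinct_map)
  show "finite {xs. set xs \<subseteq> edges G \<and> distinct xs}"
    using assms unfolding wf_routing_def by (intro finite_subset_distinct) simp
qed

lemma feasible_exists:
  assumes "wf_routing G"
  shows "\<exists>f. feasible G f"
proof -
  have "\<forall>i. \<exists>P. i < ncom G \<longrightarrow> P \<in> paths G i"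
    using assms unfolding wf_routing_def by blast
  then obtain p where p: "\<And>i. i < ncom G \<Longrightarrow> p i \<in> paths G i"
    by metis
  define f where "f = (\<lambda>i P. if P = p i then mass G i else 0)"
  have "feasible G f"
    using assms p finite_paths[OF assms]
    unfolding feasible_def f_def wf_routing_def by (auto simp: sum.delta' less_imp_le)
  then show ?thesis by blast
qed

lemma total_latency_nonneg:
  assumes "wf_routing G" "feasible G f"
  shows "total_latency G f \<ge> 0"
proof -
  have flow: "edge_flow G f e \<ge> 0" for e
    using assms(2) unfolding edge_flow_def feasible_def by (auto intro!: sum_nonneg)
  then have "lat G e (edge_flow G f e) \<ge> 0" if "e \<in> edges G" for e
    using assms(1) that unfolding wf_routing_def by auto
  then show ?thesis
    unfolding total_latency_def using flow by (auto intro!: sum_nonneg)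
qed

lemma opt_latency_nonneg:
  assumes "wf_routing G"
  shows "opt_latency G \<ge> 0"
  unfolding opt_latency_def
  using feasible_exists[OF assms] total_latency_nonneg[OF assms] by (intro cInf_greatest) auto

lemma opt_latency_le_total_latency:
  assumes "wf_routing G" "feasible G f"
  shows "opt_latency G \<le> total_latency G f"
  unfolding opt_latency_def
  using assms total_latency_nonneg[OF assms(1)] by (intro cInf_lower bdd_belowI[where m = 0]) auto

lemma opt_latency_le_nash_latency:
  assumes "wf_routing G"
  shows "ereal (opt_latency G) \<le> nash_latency G T"
proof (cases "\<exists>f. nash G T f")
  case True
  then obtain f where f: "nash G T f" ..
  then have "ereal (opt_latency G) \<le> ereal (total_latency G f)"
    using opt_latency_le_total_latency[OF assms] unfolding nash_def by simp
  also have "\<dots> \<le> nash_latency G T"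
    unfolding nash_latency_def using True f by (auto intro: Sup_upper)
  finally show ?thesis .
qed (simp add: nash_latency_def)

lemma poa_ratio_ge_1:
  assumes "LO \<ge> 0" "ereal LO \<le> LN"
  shows "poa_ratio LN LO \<ge> 1"
proof (cases "LO = 0")
  case False
  then have "ereal LO / ereal LO \<le> LN / ereal LO"
    using assms by (intro ereal_divide_right_mono) auto
  then show ?thesis using False unfolding poa_ratio_def by simp
qed (simp add: poa_ratio_def)

lemma PoA_ge_1:
  assumes "\<forall>G\<in>\<G>. wf_routing G" "\<G> \<noteq> {}"
  shows "PoA \<G> T \<ge> 1"
proof -
  obtain G where G: "G \<in> \<G>" using assms(2) by blast
  have "1 \<le> poa_ratio (nash_latency G T) (opt_latency G)"
    using G assms(1) opt_latency_nonneg opt_latency_le_nash_latency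
    by (intro poa_ratio_ge_1) auto
  also have "\<dots> \<le> PoA \<G> T"
    unfolding PoA_def using G by (rule SUP_upper)
  finally show ?thesis .
qed

theorem theorem1:
  fixes \<G> :: "('v, 'e) routing set" and \<beta> :: real and Tplus Tminus :: mechanism
  assumes "\<forall>G\<in>\<G>. wf_routing G"
    and "\<G> \<noteq> {}"
    and "\<beta> \<ge> 0"
    and "optimal_tolling \<G> \<beta> Tplus"
    and "optimal_subsidy \<G> \<beta> Tminus"
  shows "PoA \<G> Tplus \<ge> PoA \<G> Tminus \<and> PoA \<G> Tminus \<ge> 1 \<and>
         ((\<forall>T. optimal_subsidy \<G> \<beta> T \<longrightarrow> tightly_bounded \<G> \<beta> T)
            \<longrightarrow> PoA \<G> Tplus > PoA \<G> Tminus)"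
proof -
  let ?S = "subsidy_of_toll \<beta> Tplus"
  have toll: "bounded_tolling \<G> \<beta> Tplus"
    using assms(4) unfolding optimal_tolling_def ..
  have subsidy: "bounded_subsidy \<G> \<beta> ?S"
    using bounded_subsidy_subsidy_of_toll[OF assms(1,3) toll] .
  have same: "PoA \<G> ?S = PoA \<G> Tplus"
    using PoA_subsidy_of_toll[OF assms(3)] .
  have le: "PoA \<G> Tminus \<le> PoA \<G> Tplus"
    using assms(5) subsidy same unfolding optimal_subsidy_def by metis
  have strict: "PoA \<G> Tminus < PoA \<G> Tplus"
    if "\<forall>T. optimal_subsidy \<G> \<beta> T \<longrightarrow> tightly_bounded \<G> \<beta> T"
  proof -
    have "\<not> optimal_subsidy \<G> \<beta> ?S"
      using that not_tightly_bounded_subsidy_of_toll[OF assms(3) toll] by blast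
    then have "PoA \<G> Tminus \<noteq> PoA \<G> Tplus"
      using assms(5) subsidy same unfolding optimal_subsidy_def by force
    then show ?thesis using le by simp
  qed
  show ?thesis
    using le strict PoA_ge_1[OF assms(1,2)] by blast
qed

end
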